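(* Let $\mathcal P$ be a polycyclic presentation on $g_1,\ldots,g_n$ with $r_1<\infty$, assume the subpresentation $\mathcal P^{[2]}$ is consistent, and assume there is an endomorphism $\sigma$ of $H^{[2]}$ with $\sigma(g_j)=g^{a_{1,j}}$ for $2\le j\le n$. (a) If $c(g_jg_1^{r_1})=c(g_j\,g^{e_1})$ holds for all $j>1$, then $\sigma^{r_1}$ equals the inner automorphism $x\mapsto (g^{e_1})^{-1}x\,g^{e_1}$ of $H^{[2]}$, and $\sigma$ is an automorphism. (b) If moreover $c(g_1^{r_1+1})=c(g_1\,g^{e_1})$ holds, then $\sigma$ fixes (the element represented by) $g^{e_1}$.
   Context: A polycyclic presentation $\mathcal P$ on generators $g_1,\ldots,g_n$ consists of $r_1,\ldots,r_n\in\mathbb N\cup\{\infty\}$ and integers $e_{i,k},a_{i,j,k},b_{i,j,k}$ ($1\le i<j\le n$, $1\le k\le n$) with $0\le e_{i,k},a_{i,j,k},b_{i,j,k}<r_k$ whenever $r_k<\infty$, and has defining relations $g_i^{r_i}=g^{e_i}$ (for $r_i<\infty$), $g_jg_i=g_ig^{a_{i,j}}$ (for $i<j$), $g_jg_i^{-1}=g_i^{-1}g^{b_{i,j}}$ (for $i<j$, $r_i=\infty$), where $g^{e_i}=g_{i+1}^{e_{i,i+1}}\cdots g_n^{e_{i,n}}$, $g^{a_{i,j}}=g_{i+1}^{a_{i,j,i+1}}\cdots g_n^{a_{i,j,n}}$, $g^{b_{i,j}}=g_{i+1}^{b_{i,j,i+1}}\cdots g_n^{b_{i,j,n}}$ (with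 $g_k^x$ for $x<0$ meaning $(g_k^{-1})^{|x|}$). From the presentation one computes integers $c_{i,j,k},d_{i,j,k},f_{i,k}$ (in $[0,r_k)$ when $r_k<\infty$) such that in the presented group $g_j^{-1}g_i=g_ig^{c_{i,j}}$ ($i<j$, $r_j=\infty$), $g_j^{-1}g_i^{-1}=g_i^{-1}g^{d_{i,j}}$ ($i<j$, $r_i=r_j=\infty$), $g_i^{-1}=g_i^{r_i-1}g^{f_i}$ ($r_i<\infty$). Let $M$ be the free monoid on $\{g_1^{\pm1},\ldots,g_n^{\pm1}\}$. A collection step replaces a subword equal to the left-hand side of one of these six kinds of relations by its right-hand side, or deletes $g_ig_i^{-1}$ or $g_i^{-1}g_i$; a word admitting no step is reduced (of the form $g_1^{x_1}\cdots g_n^{x_n}$ with $0\le x_i<r_i$ if $r_i<\infty$). The collection-to-the-left algorithm applies steps, always choosing the leftmost occurrence of a non-reduced subword involving a generator of smallest index (lower index has priority), until the word is reduced; $c\colon M\to M$ maps a word to the result. $\mathcal P^{[2]}$ is the presentation on $g_2,\ldots,g_n$ consisting of those relations above with $i\ge2$; $H^{[2]}$ is the group it defines. $\mathcal P^{[2]}$ is consistent if every element of $H^{[2]}$ is represented by exactly one reduced word in $g_2,\ldots,g_n$. *)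

theory Defs
  imports "HOL-Algebra.Group" "HOL-Library.Extended_Nat"
begin

text \<open>Words in the free monoid M on g_1^{+-1},...,g_n^{+-1}: a letter (i, True) is g_i,
  a letter (i, False) is g_i^{-1}.\<close>
type_synonym word = "(nat \<times> bool) list"

text \<open>A polycyclic presentation together with the derived data c, d, f.
  pr i = \<infinity> encodes r_i = \<infinity>.  pe i k = e_{i,k}, pa i j k = a_{i,j,k}, pb i j k = b_{i,j,k},
  pc i j k = c_{i,j,k}, pd i j k = d_{i,j,k}, pf i k = f_{i,k}.\<close>
record pcp =
  pn :: nat
  pr :: "nat \<Rightarrow> enat"
  pe :: "nat \<Rightarrow> nat \<Rightarrow> int"
  pa :: "nat \<Rightarrow> nat \<Rightarrow> nat \<Rightarrow> int"
  pb :: "nat \<Rightarrow> nat \<Rightarrow> nat \<Rightarrow> int"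
  pc :: "nat \<Rightarrow> nat \<Rightarrow> nat \<Rightarrow> int"
  pd :: "nat \<Rightarrow> nat \<Rightarrow> nat \<Rightarrow> int"
  pf :: "nat \<Rightarrow> nat \<Rightarrow> int"

definition exp_ok :: "enat \<Rightarrow> int \<Rightarrow> bool" where
  "exp_ok r x = (case r of \<infinity> \<Rightarrow> True | enat m \<Rightarrow> 0 \<le> x \<and> x < int m)"

text \<open>gvec P i x is the word g_{i+1}^{x_{i+1}} ... g_n^{x_n}
  (with g_k^x for x < 0 meaning (g_k^{-1})^{|x|}).\<close>
definition gvec :: "pcp \<Rightarrow> nat \<Rightarrow> (nat \<Rightarrow> int) \<Rightarrow> word" where
  "gvec P i x = concat (map (\<lambda>k. replicate (nat \<bar>x k\<bar>) (k, 0 \<le> x k)) [Suc i..<Suc (pn P)])"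

definition inv_word :: "word \<Rightarrow> word" where
  "inv_word w = rev (map (\<lambda>(i, s). (i, \<not> s)) w)"

definition nf_word :: "pcp \<Rightarrow> nat \<Rightarrow> word \<Rightarrow> bool" where
  "nf_word P i w =
     (\<exists>x. w = gvec P i x \<and> (\<forall>k\<in>{Suc i..pn P}. exp_ok (pr P k) (x k)))"

definition words_over :: "pcp \<Rightarrow> nat \<Rightarrow> word set" where
  "words_over P m = {w. \<forall>l\<in>set w. fst l \<in> {m..pn P}}"

definition pcp_wf :: "pcp \<Rightarrow> bool" where
  "pcp_wf P =
    ((\<forall>i\<in>{1..pn P}. pr P i \<noteq> 0) \<and>
     (\<forall>i\<in>{1..pn P}. \<forall>k\<in>{Suc i..pn P}. exp_ok (pr P k) (pe P i k)) \<and>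
     (\<forall>i j k. 1 \<le> i \<and> i < j \<and> j \<le> pn P \<and> i < k \<and> k \<le> pn P \<longrightarrow>
        exp_ok (pr P k) (pa P i j k) \<and> exp_ok (pr P k) (pb P i j k)))"

text \<open>Equality in the group H^[m] presented by the subpresentation P^[m]
  (relations with i \<ge> m, on the generators g_m,...,g_n): the congruence on words generated by
  free cancellation and the defining relations of P^[m].\<close>
inductive peq :: "pcp \<Rightarrow> nat \<Rightarrow> word \<Rightarrow> word \<Rightarrow> bool" for P m where
  refl: "peq P m w w"
| sym: "peq P m u v \<Longrightarrow> peq P m v u"
| trans: "peq P m u v \<Longrightarrow> peq P m v w \<Longrightarrow> peq P m u w"
| ctxt: "peq P m u v \<Longrightarrow> peq P m (x @ u @ y) (x @ v @ y)"
| cancel1: "i \<in> {m..pn P} \<Longrightarrow> peq P m [(i, True), (i, False)] []"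
| cancel2: "i \<in> {m..pn P} \<Longrightarrow> peq P m [(i, False), (i, True)] []"
| power: "i \<in> {m..pn P} \<Longrightarrow> pr P i = enat k \<Longrightarrow>
           peq P m (replicate k (i, True)) (gvec P i (pe P i))"
| conj: "m \<le> i \<Longrightarrow> i < j \<Longrightarrow> j \<le> pn P \<Longrightarrow>
           peq P m [(j, True), (i, True)] ((i, True) # gvec P i (pa P i j))"
| conj_inv: "m \<le> i \<Longrightarrow> i < j \<Longrightarrow> j \<le> pn P \<Longrightarrow> pr P i = \<infinity> \<Longrightarrow>
           peq P m [(j, True), (i, False)] ((i, False) # gvec P i (pb P i j))"

definition consistent2 :: "pcp \<Rightarrow> bool" where
  "consistent2 P = (\<forall>w\<in>words_over P 2. \<exists>!v. nf_word P 1 v \<and> peq P 2 w v)"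

definition cls :: "pcp \<Rightarrow> word \<Rightarrow> word set" where
  "cls P w = {v. peq P 2 w v}"

definition H2 :: "pcp \<Rightarrow> word set monoid" where
  "H2 P = \<lparr>carrier = (\<lambda>w. cls P w) ` words_over P 2,
           mult = (\<lambda>A B. {w. \<exists>u\<in>A. \<exists>v\<in>B. peq P 2 (u @ v) w}),
           one = cls P []\<rparr>"

text \<open>The data c, d, f are those computed from the presentation: g^{c_{i,j}}, g^{d_{i,j}}, g^{f_i}
  are the (reduced) expressions of (g^{a_{i,j}})^{-1}, (g^{b_{i,j}})^{-1}, (g^{e_i})^{-1}, which
  is equivalent to the relations g_j^{-1}g_i = g_i g^{c_{i,j}}, g_j^{-1}g_i^{-1} = g_i^{-1}g^{d_{i,j}},
  g_i^{-1} = g_i^{r_i-1}g^{f_i}; they are required to hold in H^[2].\<close>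
definition derived_ok :: "pcp \<Rightarrow> bool" where
  "derived_ok P =
    ((\<forall>i j. 1 \<le> i \<and> i < j \<and> j \<le> pn P \<and> pr P j = \<infinity> \<longrightarrow>
        (\<forall>k\<in>{Suc i..pn P}. exp_ok (pr P k) (pc P i j k)) \<and>
        peq P 2 (gvec P i (pc P i j)) (inv_word (gvec P i (pa P i j)))) \<and>
     (\<forall>i j. 1 \<le> i \<and> i < j \<and> j \<le> pn P \<and> pr P i = \<infinity> \<and> pr P j = \<infinity> \<longrightarrow>
        (\<forall>k\<in>{Suc i..pn P}. exp_ok (pr P k) (pd P i j k)) \<and>
        peq P 2 (gvec P i (pd P i j)) (inv_word (gvec P i (pb P i j)))) \<and>
     (\<forall>i\<in>{1..pn P}. pr P i \<noteq> \<infinity> \<longrightarrow>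
        (\<forall>k\<in>{Suc i..pn P}. exp_ok (pr P k) (pf P i k)) \<and>
        peq P 2 (gvec P i (pf P i)) (inv_word (gvec P i (pe P i)))))"

text \<open>Collection rules: rule_app P lhs rhs i means lhs \<rightarrow> rhs is a collection step whose
  smallest involved generator index is i.\<close>
inductive rule_app :: "pcp \<Rightarrow> word \<Rightarrow> word \<Rightarrow> nat \<Rightarrow> bool" for P where
  r_pow: "i \<in> {1..pn P} \<Longrightarrow> pr P i = enat m \<Longrightarrow>
     rule_app P (replicate m (i, True)) (gvec P i (pe P i)) i"
| r_a: "1 \<le> i \<Longrightarrow> i < j \<Longrightarrow> j \<le> pn P \<Longrightarrow>
     rule_app P [(j, True), (i, True)] ((i, True) # gvec P i (pa P i j)) i"
| r_b: "1 \<le> i \<Longrightarrow> i < j \<Longrightarrow> j \<le> pn P \<Longrightarrow> pr P i = \<infinity> \<Longrightarrow>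
     rule_app P [(j, True), (i, False)] ((i, False) # gvec P i (pb P i j)) i"
| r_c: "1 \<le> i \<Longrightarrow> i < j \<Longrightarrow> j \<le> pn P \<Longrightarrow> pr P j = \<infinity> \<Longrightarrow>
     rule_app P [(j, False), (i, True)] ((i, True) # gvec P i (pc P i j)) i"
| r_d: "1 \<le> i \<Longrightarrow> i < j \<Longrightarrow> j \<le> pn P \<Longrightarrow> pr P i = \<infinity> \<Longrightarrow> pr P j = \<infinity> \<Longrightarrow>
     rule_app P [(j, False), (i, False)] ((i, False) # gvec P i (pd P i j)) i"
| r_f: "i \<in> {1..pn P} \<Longrightarrow> pr P i = enat m \<Longrightarrow>
     rule_app P [(i, False)] (replicate (m - 1) (i, True) @ gvec P i (pf P i)) i"
| r_del1: "i \<in> {1..pn P} \<Longrightarrow> rule_app P [(i, True), (i, False)] [] i"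
| r_del2: "i \<in> {1..pn P} \<Longrightarrow> rule_app P [(i, False), (i, True)] [] i"

definition coll_step :: "pcp \<Rightarrow> word \<Rightarrow> word \<Rightarrow> bool" where
  "coll_step P w w' =
    (\<exists>x l y rhs i. w = x @ l @ y \<and> rule_app P l rhs i \<and> w' = x @ rhs @ y \<and>
       (\<forall>x' l' y' rhs' i'. w = x' @ l' @ y' \<and> rule_app P l' rhs' i' \<longrightarrow>
          i < i' \<or> (i = i' \<and> length x \<le> length x')))"

definition collects :: "pcp \<Rightarrow> word \<Rightarrow> word \<Rightarrow> bool" where
  "collects P w v = ((coll_step P)\<^sup>*\<^sup>* w v \<and> nf_word P 0 v)"

definition same_coll :: "pcp \<Rightarrow> word \<Rightarrow> word \<Rightarrow> bool" where
  "same_coll P u w = (\<exists>v. collects P u v \<and> collects P w v)"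

end

theory Submission
  imports Defs
begin

text \<open>
  Conjugation by g_1 acts on H^[2] as \<sigma>, because g_j g_1 = g_1 g^{a_{1,j}}. Hence a word w
  equals g_1^k (h w) in the group presented by P, where k is the number of letters g_1 in w
  and h w \<in> H^[2] arises by moving every other letter to the left past the g_1's behind it,
  applying \<sigma> once per passage. Every collection step preserves k and h w, except the
  rewriting g_1^{r_1} \<rightarrow> g^{e_1}, which collection to the left can only perform at the very
  beginning of the word. So when two words with the same k < 2 r_1 collect to the same reduced
  word, either no such step occurs or exactly one, at the front, and in both cases their
  h-values agree. Applied to g^{e_1} \<sigma>^{r_1}(g_j) and g_j g^{e_1} this makes \<sigma>^{r_1} the
  conjugation by g^{e_1} on the generators, hence everywhere, so \<sigma> is bijective; applied to
  g^{e_1} g_1 and g_1 g^{e_1} it gives \<sigma>(g^{e_1}) = g^{e_1}.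
\<close>

lemma count_list_replicate [simp]: "count_list (replicate n x) y = (if x = y then n else 0)"
  by (induction n) auto

lemma hom_funpow:
  assumes "f \<in> hom G G"
  shows "f ^^ n \<in> hom G G"
proof (induction n)
  case 0
  show ?case using iso_imp_homomorphism[OF iso_set_refl] by simp
next
  case (Suc n)
  then show ?case unfolding funpow.simps(2) by (rule hom_compose[OF _ assms])
qed

lemma bij_betw_if_funpow_Suc:
  assumes into: "f ` A \<subseteq> A" and bij: "bij_betw (f ^^ Suc n) A A"
  shows "bij_betw f A A"
proof (rule bij_betw_imageI)
  have funpow_into: "(f ^^ k) x \<in> A" if "x \<in> A" for k x
    using that into by (induction k) auto
  show "inj_on f A"
  proof (rule inj_onI)
    fix x y
    assume x: "x \<in> A" and y: "y \<in> A" and "f x = f y"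
    then have "(f ^^ Suc n) x = (f ^^ Suc n) y" by (simp only: funpow_Suc_right comp_def)
    from inj_onD[OF bij_betw_imp_inj_on[OF bij] this x y] show "x = y" .
  qed
  show "f ` A = A"
  proof
    show "A \<subseteq> f ` A"
    proof
      fix y
      assume "y \<in> A"
      then obtain z where "z \<in> A" "y = f ((f ^^ n) z)" using bij by (auto simp: bij_betw_def)
      then show "y \<in> f ` A" using funpow_into by blast
    qed
  qed (rule into)
qed

context group
begin

lemma inv_mult_eq_mult_inv:
  assumes "a \<in> carrier G" "b \<in> carrier G" "c \<in> carrier G" and "a \<otimes> b = b \<otimes> c"
  shows "inv a \<otimes> b = b \<otimes> inv c"
proof -
  have "inv a \<otimes> b = inv a \<otimes> (b \<otimes> c) \<otimes> inv c" using assms(1-3) by (simp add: m_assoc)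
  also have "\<dots> = inv a \<otimes> (a \<otimes> b) \<otimes> inv c" by (simp only: assms(4))
  also have "\<dots> = b \<otimes> inv c" using assms(1-3) by (simp flip: m_assoc)
  finally show ?thesis .
qed

lemma nat_pow_pred_mult_inv:
  assumes "g \<in> carrier G" "0 < (m::nat)"
  shows "g [^] (m - 1) \<otimes> inv (g [^] m) = inv g"
proof -
  obtain k where m: "m = Suc k" using assms(2) by (cases m) auto
  have "g [^] (m - 1) \<otimes> inv (g [^] m) = g [^] k \<otimes> inv (g \<otimes> g [^] k)"
    using assms(1) by (simp only: m nat_pow_Suc2 diff_Suc_1)
  also have "\<dots> = inv g" using assms(1) by (simp add: inv_mult_group flip: m_assoc)
  finally show ?thesis .
qed

lemma inner_hom: "a \<in> carrier G \<Longrightarrow> (\<lambda>x. inv a \<otimes> x \<otimes> a) \<in> hom G G"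
  by (rule homI) (simp_all add: m_assoc flip: m_assoc[of a "inv a"])

lemma inner_bij: "a \<in> carrier G \<Longrightarrow> bij_betw (\<lambda>x. inv a \<otimes> x \<otimes> a) (carrier G) (carrier G)"
  by (rule bij_betw_byWitness[where f' = "\<lambda>y. a \<otimes> y \<otimes> inv a"])
    (auto simp: m_assoc simp flip: m_assoc[of a "inv a"] m_assoc[of "inv a" a])

end

subsection \<open>The group H^[2]\<close>

lemma cls_eq_iff: "cls P u = cls P v \<longleftrightarrow> peq P 2 u v"
proof
  assume "cls P u = cls P v"
  moreover have "v \<in> cls P v" by (simp add: cls_def peq.refl)
  ultimately have "v \<in> cls P u" by simp
  then show "peq P 2 u v" by (simp add: cls_def)
next
  assume "peq P 2 u v"
  then show "cls P u = cls P v" unfolding cls_def by (blast intro: peq.trans peq.sym)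
qed

lemma cls_mult: "cls P u \<otimes>\<^bsub>H2 P\<^esub> cls P v = cls P (u @ v)"
proof -
  have "peq P 2 (u @ v) w" if "peq P 2 u u'" "peq P 2 v v'" "peq P 2 (u' @ v') w" for u' v' w
  proof -
    have "peq P 2 (u @ v) (u' @ v)" using peq.ctxt[OF that(1), of "[]" v] by simp
    moreover have "peq P 2 (u' @ v) (u' @ v')" using peq.ctxt[OF that(2), of u' "[]"] by simp
    ultimately show ?thesis using that(3) by (blast intro: peq.trans)
  qed
  then show ?thesis unfolding H2_def cls_def by (auto intro: peq.refl)
qed

lemma cls_Cons: "cls P (l # w) = cls P [l] \<otimes>\<^bsub>H2 P\<^esub> cls P w"
  by (simp add: cls_mult)

lemma inv_word_simps [simp]:
  "inv_word [] = []"
  "inv_word (l # w) = inv_word w @ [(fst l, \<not> snd l)]"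
  "inv_word (u @ v) = inv_word v @ inv_word u"
  by (auto simp: inv_word_def split: prod.splits)

lemma words_over_simps [simp]:
  "[] \<in> words_over P m"
  "l # w \<in> words_over P m \<longleftrightarrow> fst l \<in> {m..pn P} \<and> w \<in> words_over P m"
  "u @ w \<in> words_over P m \<longleftrightarrow> u \<in> words_over P m \<and> w \<in> words_over P m"
  "replicate k l \<in> words_over P m \<longleftrightarrow> k = 0 \<or> fst l \<in> {m..pn P}"
  by (auto simp: words_over_def)

lemma inv_word_in_words_over [simp]: "inv_word w \<in> words_over P m \<longleftrightarrow> w \<in> words_over P m"
  by (induction w) auto

lemma peq_inv_word_append: "w \<in> words_over P 2 \<Longrightarrow> peq P 2 (inv_word w @ w) []"
proof (induction w)
  case Nil
  then show ?case by (simp add: peq.refl)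
next
  case (Cons l w)
  obtain i s where l: "l = (i, s)" by (cases l)
  have i: "i \<in> {2..pn P}" using Cons.prems l by simp
  have "peq P 2 [(i, \<not> s), (i, s)] []"
    using peq.cancel1[OF i] peq.cancel2[OF i] by (cases s) auto
  from peq.ctxt[OF this, of "inv_word w" w]
  have "peq P 2 (inv_word (l # w) @ l # w) (inv_word w @ w)" using l by simp
  then show ?case using Cons by (auto intro: peq.trans)
qed

lemma H2_carrier: "carrier (H2 P) = cls P ` words_over P 2"
  by (simp add: H2_def)

lemma H2_one: "\<one>\<^bsub>H2 P\<^esub> = cls P []"
  by (simp add: H2_def)

lemma cls_in_carrier: "w \<in> words_over P 2 \<Longrightarrow> cls P w \<in> carrier (H2 P)"
  by (simp add: H2_carrier)

lemma group_H2: "group (H2 P)"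
proof (rule groupI)
  fix x
  assume "x \<in> carrier (H2 P)"
  then obtain w where w: "w \<in> words_over P 2" "x = cls P w" by (auto simp: H2_carrier)
  have "cls P (inv_word w) \<otimes>\<^bsub>H2 P\<^esub> x = \<one>\<^bsub>H2 P\<^esub>"
    using w peq_inv_word_append[OF w(1)] by (simp add: cls_mult H2_one cls_eq_iff)
  then show "\<exists>y\<in>carrier (H2 P). y \<otimes>\<^bsub>H2 P\<^esub> x = \<one>\<^bsub>H2 P\<^esub>"
    using w(1) cls_in_carrier inv_word_in_words_over by blast
qed (auto simp: H2_carrier H2_one cls_mult)

lemma cls_inv_word: "w \<in> words_over P 2 \<Longrightarrow> cls P (inv_word w) = inv\<^bsub>H2 P\<^esub> cls P w"
proof -
  assume w: "w \<in> words_over P 2"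
  interpret group "H2 P" by (rule group_H2)
  have "cls P (inv_word w) \<otimes>\<^bsub>H2 P\<^esub> cls P w = \<one>\<^bsub>H2 P\<^esub>"
    using peq_inv_word_append[OF w] by (simp add: cls_mult H2_one cls_eq_iff)
  then show ?thesis using w by (intro inv_equality[symmetric]) (auto intro: cls_in_carrier)
qed

lemma cls_inv_letter: "j \<in> {2..pn P} \<Longrightarrow> cls P [(j, False)] = inv\<^bsub>H2 P\<^esub> cls P [(j, True)]"
  using cls_inv_word[of "[(j, True)]" P] by simp

lemma cls_replicate: "cls P (replicate m l) = cls P [l] [^]\<^bsub>H2 P\<^esub> m"
proof (induction m)
  case 0
  show ?case by (simp add: H2_one)
next
  case (Suc m)
  have "cls P (replicate (Suc m) l) = cls P (replicate m l) \<otimes>\<^bsub>H2 P\<^esub> cls P [l]"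
    by (simp add: cls_mult replicate_append_same)
  then show ?case using Suc by simp
qed

lemma H2_hom_eqI:
  assumes f: "f \<in> hom (H2 P) (H2 P)" and g: "g \<in> hom (H2 P) (H2 P)"
    and gens: "\<And>j. j \<in> {2..pn P} \<Longrightarrow> f (cls P [(j, True)]) = g (cls P [(j, True)])"
    and x: "x \<in> carrier (H2 P)"
  shows "f x = g x"
proof -
  interpret f: group_hom "H2 P" "H2 P" f using f group_H2 by (simp add: group_hom_def group_hom_axioms_def)
  interpret g: group_hom "H2 P" "H2 P" g using g group_H2 by (simp add: group_hom_def group_hom_axioms_def)
  obtain w where w: "w \<in> words_over P 2" and xw: "x = cls P w" using x by (auto simp: H2_carrier)
  have "f (cls P w) = g (cls P w)"
    using w
  proof (induction w)
    case Nil
    then show ?case by (simp flip: H2_one)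
  next
    case (Cons l w)
    obtain j s where l: "l = (j, s)" by (cases l)
    have j: "j \<in> {2..pn P}" and w: "w \<in> words_over P 2" using Cons.prems l by auto
    have "f (cls P [l]) = g (cls P [l])"
      using gens[OF j] cls_inv_letter[OF j] cls_in_carrier[of "[(j, True)]" P] j l
      by (cases s) auto
    then show ?case
      unfolding cls_Cons[of P l w]
      using Cons.IH[OF w] cls_in_carrier[OF w] cls_in_carrier[of "[l]" P] j l by simp
  qed
  then show ?thesis unfolding xw .
qed

lemma peq_inv_letter_Cons:
  assumes j: "j \<in> {2..pn P}" and x: "x \<in> words_over P 2" and a: "a \<in> words_over P 2"
    and rel: "peq P 2 ((j, True) # x) (x @ a)" and b: "peq P 2 b (inv_word a)"
  shows "peq P 2 ((j, False) # x) (x @ b)"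
proof -
  interpret group "H2 P" by (rule group_H2)
  have carrier: "cls P [(j, True)] \<in> carrier (H2 P)" "cls P x \<in> carrier (H2 P)" "cls P a \<in> carrier (H2 P)"
    using j x a by (auto intro: cls_in_carrier)
  have "cls P [(j, True)] \<otimes>\<^bsub>H2 P\<^esub> cls P x = cls P x \<otimes>\<^bsub>H2 P\<^esub> cls P a"
    using rel by (simp add: cls_mult flip: cls_eq_iff)
  then have "inv\<^bsub>H2 P\<^esub> cls P [(j, True)] \<otimes>\<^bsub>H2 P\<^esub> cls P x = cls P x \<otimes>\<^bsub>H2 P\<^esub> inv\<^bsub>H2 P\<^esub> cls P a"
    using carrier by (intro inv_mult_eq_mult_inv)
  moreover have "cls P b = inv\<^bsub>H2 P\<^esub> cls P a" using b cls_inv_word[OF a] by (simp flip: cls_eq_iff)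
  ultimately have "cls P ((j, False) # x) = cls P (x @ b)"
    by (simp add: cls_Cons[of P "(j, False)" x] cls_inv_letter[OF j] flip: cls_mult)
  then show ?thesis by (simp only: cls_eq_iff)
qed

lemma set_gvecD: "l \<in> set (gvec P i x) \<Longrightarrow> fst l \<in> {Suc i..pn P} \<and> (snd l \<longleftrightarrow> 0 \<le> x (fst l))"
  by (auto simp: gvec_def)

lemma gvec_in_words_over: "m \<le> Suc i \<Longrightarrow> gvec P i x \<in> words_over P m"
  using set_gvecD unfolding words_over_def by fastforce

subsection \<open>Admissible words and the H^[2]-part of a word\<close>

abbreviation g1 :: "nat \<times> bool" where
  "g1 \<equiv> (1, True)"

text \<open>Collection steps preserve admissibility; as r_1 < \<infinity>, admissible words contain no g_1^{-1}.\<close>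
definition admissible :: "pcp \<Rightarrow> word \<Rightarrow> bool" where
  "admissible P w \<longleftrightarrow> (\<forall>(k, s) \<in> set w. k \<in> {1..pn P} \<and> (\<not> s \<longrightarrow> pr P k = \<infinity>))"

lemma admissible_simps [simp]:
  "admissible P []"
  "admissible P (l # w) \<longleftrightarrow> fst l \<in> {1..pn P} \<and> (\<not> snd l \<longrightarrow> pr P (fst l) = \<infinity>) \<and> admissible P w"
  "admissible P (u @ w) \<longleftrightarrow> admissible P u \<and> admissible P w"
  "admissible P (replicate k l) \<longleftrightarrow> k = 0 \<or> admissible P [l]"
  by (cases k) (auto simp: admissible_def split: prod.splits)

lemma admissible_gvec:
  assumes "\<forall>k\<in>{Suc i..pn P}. exp_ok (pr P k) (x k)"
  shows "admissible P (gvec P i x)"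
  unfolding admissible_def
proof (clarify)
  fix k s
  assume "(k, s) \<in> set (gvec P i x)"
  with set_gvecD have k: "k \<in> {Suc i..pn P}" and "\<not> s \<longleftrightarrow> x k < 0" by fastforce+
  moreover have "exp_ok (pr P k) (x k)" using assms k by blast
  ultimately show "k \<in> {1..pn P} \<and> (\<not> s \<longrightarrow> pr P k = \<infinity>)"
    by (cases "pr P k") (auto simp: exp_ok_def)
qed

lemma count_g1_words_over: "w \<in> words_over P 2 \<Longrightarrow> count_list w g1 = 0"
  by (induction w) auto

text \<open>
  If conjugation by g_1 acts as \<sigma>, then l g_1 = g_1 \<sigma>(l), so every word w equals
  g_1^k (h2_part P \<sigma> w) with k = count_list w g1.
\<close>
fun h2_part :: "pcp \<Rightarrow> (word set \<Rightarrow> word set) \<Rightarrow> word \<Rightarrow> word set" where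
  "h2_part P \<sigma> [] = \<one>\<^bsub>H2 P\<^esub>"
| "h2_part P \<sigma> (l # w) =
     (if l = g1 then h2_part P \<sigma> w
      else (\<sigma> ^^ count_list w g1) (cls P [l]) \<otimes>\<^bsub>H2 P\<^esub> h2_part P \<sigma> w)"

lemma h2_part_g1_power_append: "h2_part P \<sigma> (replicate k g1 @ w) = h2_part P \<sigma> w"
  by (induction k) auto

subsection \<open>Soundness of the collection rules\<close>

lemma rule_app_index_pos: "rule_app P l rhs i \<Longrightarrow> 1 \<le> i"
  by (induction rule: rule_app.induct) auto

locale wf_pcp =
  fixes P :: pcp
  assumes wf: "pcp_wf P" and der: "derived_ok P"
begin

interpretation H2: group "H2 P" by (rule group_H2)

lemma pr_nonzero: "i \<in> {1..pn P} \<Longrightarrow> pr P i \<noteq> 0"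
  using wf unfolding pcp_wf_def by blast

lemma exp_ok_pe: "i \<in> {1..pn P} \<Longrightarrow> \<forall>k\<in>{Suc i..pn P}. exp_ok (pr P k) (pe P i k)"
  using wf unfolding pcp_wf_def by blast

lemma exp_ok_pa_pb:
  "1 \<le> i \<Longrightarrow> i < j \<Longrightarrow> j \<le> pn P \<Longrightarrow>
    \<forall>k\<in>{Suc i..pn P}. exp_ok (pr P k) (pa P i j k) \<and> exp_ok (pr P k) (pb P i j k)"
  using wf unfolding pcp_wf_def by auto

lemma pc_spec:
  "1 \<le> i \<Longrightarrow> i < j \<Longrightarrow> j \<le> pn P \<Longrightarrow> pr P j = \<infinity> \<Longrightarrow>
    (\<forall>k\<in>{Suc i..pn P}. exp_ok (pr P k) (pc P i j k)) \<and>
    peq P 2 (gvec P i (pc P i j)) (inv_word (gvec P i (pa P i j)))"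
  using der unfolding derived_ok_def by blast

lemma pd_spec:
  "1 \<le> i \<Longrightarrow> i < j \<Longrightarrow> j \<le> pn P \<Longrightarrow> pr P i = \<infinity> \<Longrightarrow> pr P j = \<infinity> \<Longrightarrow>
    (\<forall>k\<in>{Suc i..pn P}. exp_ok (pr P k) (pd P i j k)) \<and>
    peq P 2 (gvec P i (pd P i j)) (inv_word (gvec P i (pb P i j)))"
  using der unfolding derived_ok_def by blast

lemma pf_spec:
  "i \<in> {1..pn P} \<Longrightarrow> pr P i \<noteq> \<infinity> \<Longrightarrow>
    (\<forall>k\<in>{Suc i..pn P}. exp_ok (pr P k) (pf P i k)) \<and>
    peq P 2 (gvec P i (pf P i)) (inv_word (gvec P i (pe P i)))"
  using der unfolding derived_ok_def by blast

lemma rule_app_rhs_admissible: "rule_app P l rhs i \<Longrightarrow> admissible P rhs"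
proof (induction rule: rule_app.induct)
  case (r_pow i m)
  then show ?case using exp_ok_pe admissible_gvec by blast
next
  case (r_a i j)
  then show ?case using exp_ok_pa_pb[of i j] admissible_gvec[of i P "pa P i j"] by simp
next
  case (r_b i j)
  then show ?case using exp_ok_pa_pb[of i j] admissible_gvec[of i P "pb P i j"] by simp
next
  case (r_c i j)
  then show ?case using pc_spec[of i j] admissible_gvec[of i P "pc P i j"] by simp
next
  case (r_d i j)
  then show ?case using pd_spec[of i j] admissible_gvec[of i P "pd P i j"] by simp
next
  case (r_f i m)
  then show ?case using pf_spec[of i] admissible_gvec[of i P "pf P i"] by simp
qed simp_all

lemma cls_gvec_inv:
  assumes "1 \<le> i" and "peq P 2 (gvec P i x) (inv_word (gvec P i y))"
  shows "cls P (gvec P i x) = inv\<^bsub>H2 P\<^esub> cls P (gvec P i y)"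
proof -
  have "cls P (gvec P i x) = cls P (inv_word (gvec P i y))" using assms(2) by (simp only: cls_eq_iff)
  then show ?thesis using cls_inv_word[OF gvec_in_words_over[of 2 i P y]] assms(1) by simp
qed

lemma rule_app_sound:
  assumes "rule_app P l rhs i" and "2 \<le> i"
  shows "l \<in> words_over P 2 \<and> rhs \<in> words_over P 2 \<and> cls P l = cls P rhs"
  using assms
proof (induction rule: rule_app.induct)
  case (r_pow i m)
  then show ?case using peq.power[where m = 2 and i = i and k = m] by (simp add: gvec_in_words_over cls_eq_iff)
next
  case (r_a i j)
  then show ?case using peq.conj[where m = 2 and i = i and j = j] by (simp add: gvec_in_words_over cls_eq_iff)
next
  case (r_b i j)
  then show ?case using peq.conj_inv[where m = 2 and i = i and j = j] by (simp add: gvec_in_words_over cls_eq_iff)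
next
  case (r_c i j)
  then show ?case
    using pc_spec[of i j] peq.conj[where P = P and m = 2 and i = i and j = j]
      peq_inv_letter_Cons[of j P "[(i, True)]" "gvec P i (pa P i j)" "gvec P i (pc P i j)"]
    by (simp add: gvec_in_words_over cls_eq_iff)
next
  case (r_d i j)
  then show ?case
    using pd_spec[of i j] peq.conj_inv[where P = P and m = 2 and i = i and j = j]
      peq_inv_letter_Cons[of j P "[(i, False)]" "gvec P i (pb P i j)" "gvec P i (pd P i j)"]
    by (simp add: gvec_in_words_over cls_eq_iff)
next
  case (r_f i m)
  have i: "i \<in> {2..pn P}" using r_f by auto
  have m: "0 < m" using pr_nonzero[of i] r_f by (auto simp: zero_enat_def)
  have "cls P (gvec P i (pe P i)) = cls P [(i, True)] [^]\<^bsub>H2 P\<^esub> m"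
    using peq.power[where m = 2 and i = i and k = m] r_f by (simp add: cls_eq_iff[symmetric] cls_replicate)
  then have "cls P (replicate (m - 1) (i, True) @ gvec P i (pf P i))
      = cls P [(i, True)] [^]\<^bsub>H2 P\<^esub> (m - 1) \<otimes>\<^bsub>H2 P\<^esub> inv\<^bsub>H2 P\<^esub> (cls P [(i, True)] [^]\<^bsub>H2 P\<^esub> m)"
    using pf_spec[of i] r_f cls_gvec_inv[of i "pf P i" "pe P i"]
    by (simp add: cls_mult[symmetric] cls_replicate)
  also have "\<dots> = inv\<^bsub>H2 P\<^esub> cls P [(i, True)]"
    using i m by (intro H2.nat_pow_pred_mult_inv cls_in_carrier) auto
  also have "\<dots> = cls P [(i, False)]" using cls_inv_letter[OF i] by simp
  finally show ?case using r_f by (simp add: gvec_in_words_over)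
next
  case (r_del1 i)
  then show ?case using peq.cancel1[where m = 2 and i = i] by (simp add: cls_eq_iff)
next
  case (r_del2 i)
  then show ?case using peq.cancel2[where m = 2 and i = i] by (simp add: cls_eq_iff)
qed

end

subsection \<open>Collection with respect to an endomorphism \<sigma>\<close>

locale pcp_endo = wf_pcp +
  fixes r1 :: nat and \<sigma> :: "word set \<Rightarrow> word set"
  assumes n1: "1 \<le> pn P"
    and r1: "pr P 1 = enat r1"
    and hom: "\<sigma> \<in> hom (H2 P) (H2 P)"
    and gens: "\<forall>j\<in>{2..pn P}. \<sigma> (cls P [(j, True)]) = cls P (gvec P 1 (pa P 1 j))"
begin

interpretation H2: group "H2 P" by (rule group_H2)

abbreviation h :: "word \<Rightarrow> word set" where
  "h \<equiv> h2_part P \<sigma>"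

abbreviation e :: word where
  "e \<equiv> gvec P 1 (pe P 1)"

abbreviation E :: "word set" where
  "E \<equiv> cls P e"

lemma r1_pos: "0 < r1"
  using pr_nonzero[of 1] n1 r1 by (auto simp: zero_enat_def)

lemma sigma_pow_in_carrier: "x \<in> carrier (H2 P) \<Longrightarrow> (\<sigma> ^^ k) x \<in> carrier (H2 P)"
  by (rule hom_in_carrier[OF hom_funpow[OF hom]])

lemma e_in_words_over: "e \<in> words_over P 2"
  by (rule gvec_in_words_over) simp

lemma admissible_e: "admissible P e"
  using exp_ok_pe[of 1] n1 by (intro admissible_gvec) auto

lemma E_in_carrier: "E \<in> carrier (H2 P)"
  by (rule cls_in_carrier[OF e_in_words_over])

lemma admissible_letter:
  assumes "admissible P [l]" and "l \<noteq> g1"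
  shows "fst l \<in> {2..pn P}"
proof -
  have "fst l \<noteq> 1" using assms r1 by (cases l) auto
  then show ?thesis using assms(1) by auto
qed

lemma h2_part_in_carrier: "admissible P w \<Longrightarrow> h w \<in> carrier (H2 P)"
proof (induction w)
  case Nil
  show ?case by simp
next
  case (Cons l w)
  then show ?case
  proof (cases "l = g1")
    case False
    then have "cls P [l] \<in> carrier (H2 P)"
      using admissible_letter[of l] Cons.prems by (intro cls_in_carrier) simp
    then show ?thesis using Cons False by (simp add: sigma_pow_in_carrier)
  qed simp
qed

lemma h2_part_append:
  assumes "admissible P u" and "admissible P v"
  shows "h (u @ v) = (\<sigma> ^^ count_list v g1) (h u) \<otimes>\<^bsub>H2 P\<^esub> h v"
  using assms(1)
proof (induction u)
  case Nil
  then show ?case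
    using hom_one[OF hom_funpow[OF hom] group_H2 group_H2] h2_part_in_carrier[OF assms(2)] by simp
next
  case (Cons l u)
  show ?case
  proof (cases "l = g1")
    case True
    then show ?thesis using Cons by simp
  next
    case False
    have l: "cls P [l] \<in> carrier (H2 P)"
      using admissible_letter[OF _ False] Cons.prems by (intro cls_in_carrier) simp
    have hu: "h u \<in> carrier (H2 P)" and hv: "h v \<in> carrier (H2 P)"
      using Cons.prems assms(2) by (auto intro: h2_part_in_carrier)
    let ?k = "count_list u g1" and ?m = "count_list v g1"
    have "\<sigma> ^^ (?k + ?m) = \<sigma> ^^ ?m \<circ> \<sigma> ^^ ?k" by (subst add.commute) (rule funpow_add)
    then have "h ((l # u) @ v) = (\<sigma> ^^ ?m) ((\<sigma> ^^ ?k) (cls P [l])) \<otimes>\<^bsub>H2 P\<^esub> ((\<sigma> ^^ ?m) (h u) \<otimes>\<^bsub>H2 P\<^esub> h v)"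
      using False Cons by simp
    also have "\<dots> = (\<sigma> ^^ ?m) (h (l # u)) \<otimes>\<^bsub>H2 P\<^esub> h v"
      using False l hu hv
      by (simp add: hom_mult[OF hom_funpow[OF hom]] sigma_pow_in_carrier H2.m_assoc)
    finally show ?thesis .
  qed
qed

lemma h2_part_words_over: "w \<in> words_over P 2 \<Longrightarrow> h w = cls P w"
proof (induction w)
  case Nil
  then show ?case by (simp add: H2_one)
next
  case (Cons l w)
  then have "l \<noteq> g1" and "w \<in> words_over P 2" by auto
  then show ?case using Cons.IH count_g1_words_over[of w P] by (simp add: cls_Cons[of P l w])
qed

lemma h2_part_e_append:
  "admissible P y \<Longrightarrow> h (e @ y) = (\<sigma> ^^ count_list y g1) E \<otimes>\<^bsub>H2 P\<^esub> h y"
  using h2_part_append[OF admissible_e] h2_part_words_over[OF e_in_words_over] by simp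

lemma rule_app_index1_effect:
  assumes "rule_app P l rhs i" and "i = 1" and "admissible P l"
  shows "(l = replicate r1 g1 \<and> rhs = e) \<or> (count_list rhs g1 = count_list l g1 \<and> h rhs = h l)"
  using assms
proof (induction rule: rule_app.induct)
  case (r_pow i m)
  then show ?case using r1 by simp
next
  case (r_a i j)
  then have j: "j \<in> {2..pn P}" by auto
  have gj: "cls P [(j, True)] \<in> carrier (H2 P)" using j by (intro cls_in_carrier) simp
  have "h [(j, True), g1] = \<sigma> (cls P [(j, True)])"
    using j gj hom_in_carrier[OF hom gj] by simp
  also have "\<dots> = h (g1 # gvec P 1 (pa P 1 j))"
    using gens j by (simp add: h2_part_words_over gvec_in_words_over)
  finally show ?case using r_a count_g1_words_over[OF gvec_in_words_over[of 2 1 P "pa P 1 j"]] by simp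
next
  case (r_c i j)
  then have j: "j \<in> {2..pn P}" by auto
  have gj: "cls P [(j, True)] \<in> carrier (H2 P)" using j by (intro cls_in_carrier) simp
  interpret \<sigma>: group_hom "H2 P" "H2 P" \<sigma>
    using hom group_H2 by (simp add: group_hom_def group_hom_axioms_def)
  have "h [(j, False), g1] = \<sigma> (inv\<^bsub>H2 P\<^esub> cls P [(j, True)])"
    using j gj hom_in_carrier[OF hom] by (simp add: cls_inv_letter[OF j])
  also have "\<dots> = inv\<^bsub>H2 P\<^esub> cls P (gvec P 1 (pa P 1 j))"
    using gj gens j by simp
  also have "\<dots> = h (g1 # gvec P 1 (pc P 1 j))"
    using r_c pc_spec[of 1 j] cls_gvec_inv[of 1 "pc P 1 j" "pa P 1 j"]
    by (simp add: h2_part_words_over gvec_in_words_over)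
  finally show ?case using r_c count_g1_words_over[OF gvec_in_words_over[of 2 1 P "pc P 1 j"]] by simp
qed (use r1 in auto)

lemma rule_app_effect:
  assumes "rule_app P l rhs i" and "admissible P l"
  shows "(i = 1 \<and> l = replicate r1 g1 \<and> rhs = e) \<or>
    (count_list rhs g1 = count_list l g1 \<and> h rhs = h l)"
proof (cases "2 \<le> i")
  case True
  then have "l \<in> words_over P 2" "rhs \<in> words_over P 2" "cls P l = cls P rhs"
    using rule_app_sound[OF assms(1)] by auto
  then show ?thesis
    using count_g1_words_over[of l P] count_g1_words_over[of rhs P] by (simp add: h2_part_words_over)
next
  case False
  with rule_app_index_pos[OF assms(1)] have "i = 1" by simp
  with rule_app_index1_effect[OF assms(1) _ assms(2)] show ?thesis by blast
qed

lemma index1_rule_at_letter_before_g1_power: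
  assumes "admissible P [a]"
  shows "\<exists>l rhs z. rule_app P l rhs 1 \<and> l @ z = a # replicate r1 g1"
proof (cases "a = g1")
  case True
  have "rule_app P (replicate r1 g1) e 1" using r1 n1 by (intro rule_app.r_pow) auto
  moreover have "replicate r1 g1 @ [g1] = a # replicate r1 g1"
    using True by (simp add: replicate_append_same)
  ultimately show ?thesis by blast
next
  case False
  obtain j s where a: "a = (j, s)" by (cases a)
  have j: "j \<in> {2..pn P}" using admissible_letter[OF assms False] a by simp
  have split: "a # replicate r1 g1 = [a, g1] @ replicate (r1 - 1) g1"
    using r1_pos by (cases r1) auto
  have "\<exists>rhs. rule_app P [a, g1] rhs 1"
  proof (cases s)
    case True
    then show ?thesis using j a rule_app.r_a[of 1 j P] by auto
  next
    case False
    then have "pr P j = \<infinity>" using assms a by simp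
    then show ?thesis using j a False rule_app.r_c[of 1 j P] by auto
  qed
  then show ?thesis using split[symmetric] by blast
qed

text \<open>Collection to the left rewrites g_1^{r_1} only at the front of the word: a letter a in
  front of g_1^{r_1} would start an index-1 rule further left.\<close>
lemma coll_step_cases:
  assumes step: "coll_step P w w'" and adm: "admissible P w"
  shows "admissible P w' \<and>
    ((count_list w' g1 = count_list w g1 \<and> h w' = h w) \<or>
     (\<exists>y. w = replicate r1 g1 @ y \<and> w' = e @ y))"
proof -
  obtain x l y rhs i where w: "w = x @ l @ y" and rule: "rule_app P l rhs i"
    and w': "w' = x @ rhs @ y"
    and leftmost: "\<And>x' l' y' rhs' i'. w = x' @ l' @ y' \<Longrightarrow> rule_app P l' rhs' i' \<Longrightarrow>
      i < i' \<or> (i = i' \<and> length x \<le> length x')"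
    using step unfolding coll_step_def by blast
  have adm_parts: "admissible P x" "admissible P l" "admissible P y" using adm w by auto
  have adm_rhs: "admissible P rhs" by (rule rule_app_rhs_admissible[OF rule])
  from rule_app_effect[OF rule adm_parts(2)]
  have "(count_list w' g1 = count_list w g1 \<and> h w' = h w) \<or>
    (\<exists>y. w = replicate r1 g1 @ y \<and> w' = e @ y)"
  proof
    assume power: "i = 1 \<and> l = replicate r1 g1 \<and> rhs = e"
    have "x = []"
    proof (rule ccontr)
      assume "x \<noteq> []"
      then obtain x' a where x: "x = x' @ [a]" by (cases x rule: rev_cases) auto
      obtain l' rhs' z where rule': "rule_app P l' rhs' 1" and l': "l' @ z = a # replicate r1 g1"
        using index1_rule_at_letter_before_g1_power[of a] adm_parts(1) x by auto
      have "w = x' @ l' @ (z @ y)" using w x power l' by (simp flip: l')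
      from leftmost[OF this rule'] show False using power x by simp
    qed
    then show ?thesis using power w w' by auto
  next
    assume "count_list rhs g1 = count_list l g1 \<and> h rhs = h l"
    then show ?thesis using adm_parts adm_rhs unfolding w w' by (simp add: h2_part_append)
  qed
  then show ?thesis using adm_parts adm_rhs w' by simp
qed

lemma collection_preserves_h2_part:
  assumes "(coll_step P)\<^sup>*\<^sup>* w v" and "admissible P w" and "count_list w g1 < r1"
  shows "count_list v g1 = count_list w g1 \<and> h v = h w \<and> admissible P v"
  using assms
proof (induction rule: rtranclp_induct)
  case (step u v)
  then have u: "count_list u g1 = count_list w g1" "h u = h w" "admissible P u" by auto
  have "\<nexists>y. u = replicate r1 g1 @ y" using u(1) step.prems(2) by auto
  then show ?case using coll_step_cases[OF step(2) u(3)] u by auto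
qed simp

lemma collection_power_step:
  assumes "(coll_step P)\<^sup>*\<^sup>* w v" and "admissible P w"
    and "count_list v g1 < r1" and "r1 \<le> count_list w g1"
  shows "\<exists>y. admissible P y \<and> count_list y g1 + r1 = count_list w g1 \<and> h y = h w \<and>
    (coll_step P)\<^sup>*\<^sup>* (e @ y) v"
  using assms
proof (induction rule: converse_rtranclp_induct)
  case (step w w')
  from coll_step_cases[OF step(1) step.prems(1)] show ?case
  proof (elim conjE disjE exE)
    assume "admissible P w'" "count_list w' g1 = count_list w g1" "h w' = h w"
    then show ?thesis using step.IH step.prems by simp
  next
    fix y
    assume "w = replicate r1 g1 @ y" "w' = e @ y"
    then show ?thesis using step(2) step.prems(1) h2_part_g1_power_append[of P \<sigma> r1 y] by auto
  qed
qed simp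

lemma nf_word_count_g1: "nf_word P 0 v \<Longrightarrow> count_list v g1 < r1"
proof -
  assume "nf_word P 0 v"
  then obtain x where v: "v = gvec P 0 x" and ok: "\<forall>k\<in>{Suc 0..pn P}. exp_ok (pr P k) (x k)"
    unfolding nf_word_def by blast
  have "exp_ok (pr P 1) (x 1)" using ok n1 by auto
  then have x1: "0 \<le> x 1" "x 1 < int r1" using r1 by (auto simp: exp_ok_def)
  have "[Suc 0..<Suc (pn P)] = 1 # [Suc 1..<Suc (pn P)]" using n1 by (simp add: upt_conv_Cons)
  then have "v = replicate (nat \<bar>x 1\<bar>) (1, 0 \<le> x 1) @ gvec P 1 x"
    unfolding v gvec_def by simp
  then show ?thesis
    using x1 count_g1_words_over[OF gvec_in_words_over[of 2 1 P x]] by simp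
qed

lemma collection_h2_part:
  assumes "collects P w v" and "admissible P w" and "count_list w g1 < 2 * r1"
  shows "h v = (if count_list w g1 < r1 then h w
                else (\<sigma> ^^ (count_list w g1 - r1)) E \<otimes>\<^bsub>H2 P\<^esub> h w)"
proof -
  have steps: "(coll_step P)\<^sup>*\<^sup>* w v" and v: "count_list v g1 < r1"
    using assms(1) nf_word_count_g1 unfolding collects_def by auto
  show ?thesis
  proof (cases "count_list w g1 < r1")
    case True
    then show ?thesis using collection_preserves_h2_part[OF steps assms(2)] by simp
  next
    case False
    then obtain y where y: "admissible P y" "count_list y g1 + r1 = count_list w g1" "h y = h w"
      and steps': "(coll_step P)\<^sup>*\<^sup>* (e @ y) v"
      using collection_power_step[OF steps assms(2) v] by auto
    have "count_list (e @ y) g1 < r1"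
      using y(2) assms(3) count_g1_words_over[OF e_in_words_over] by simp
    then have "h v = h (e @ y)"
      using collection_preserves_h2_part[OF steps'] y(1) admissible_e by simp
    moreover have "count_list y g1 = count_list w g1 - r1" using y(2) by simp
    ultimately show ?thesis using False y(1,3) h2_part_e_append by simp
  qed
qed

lemma same_collection_h2_part_eq:
  assumes "collects P u v" and "collects P w v" and "admissible P u" and "admissible P w"
    and "count_list u g1 = count_list w g1" and "count_list w g1 < 2 * r1"
  shows "h u = h w"
  using collection_h2_part[OF assms(1,3)] collection_h2_part[OF assms(2,4)] assms(5,6)
    h2_part_in_carrier[OF assms(3)] h2_part_in_carrier[OF assms(4)]
    sigma_pow_in_carrier[OF E_in_carrier]
  by (simp split: if_splits)

lemma sigma_pow_generator:
  assumes j: "j \<in> {2..pn P}"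
    and same: "same_coll P ((j, True) # replicate r1 g1) ((j, True) # e)"
  shows "(\<sigma> ^^ r1) (cls P [(j, True)]) = inv\<^bsub>H2 P\<^esub> E \<otimes>\<^bsub>H2 P\<^esub> cls P [(j, True)] \<otimes>\<^bsub>H2 P\<^esub> E"
proof -
  let ?g = "cls P [(j, True)]"
  have g: "?g \<in> carrier (H2 P)" using j by (intro cls_in_carrier) simp
  obtain v where u: "collects P ((j, True) # replicate r1 g1) v" and w: "collects P ((j, True) # e) v"
    using same unfolding same_coll_def by blast
  have "h ((j, True) # replicate r1 g1) = (\<sigma> ^^ r1) ?g"
    using j g h2_part_g1_power_append[of P \<sigma> r1 "[]"] by (simp add: sigma_pow_in_carrier)
  then obtain y where y: "admissible P y" "count_list y g1 = 0" "h y = (\<sigma> ^^ r1) ?g"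
    and steps: "(coll_step P)\<^sup>*\<^sup>* (e @ y) v"
    using collection_power_step[of "(j, True) # replicate r1 g1" v] u j n1 nf_word_count_g1
    unfolding collects_def by fastforce
  have "h (e @ y) = h ((j, True) # e)"
    using u w steps y(1,2) j r1_pos admissible_e count_g1_words_over[OF e_in_words_over]
    by (intro same_collection_h2_part_eq) (auto simp: collects_def)
  then have "E \<otimes>\<^bsub>H2 P\<^esub> (\<sigma> ^^ r1) ?g = ?g \<otimes>\<^bsub>H2 P\<^esub> E"
    using y j h2_part_e_append h2_part_words_over[OF e_in_words_over]
      count_g1_words_over[OF e_in_words_over] by simp
  then show ?thesis
    using g E_in_carrier sigma_pow_in_carrier[OF g]
    by (simp add: H2.m_assoc H2.inv_solve_left)
qed

lemma sigma_fixes_E: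
  assumes same: "same_coll P (replicate (Suc r1) g1) (g1 # e)"
  shows "\<sigma> E = E"
proof -
  obtain v where u: "collects P (replicate (Suc r1) g1) v" and w: "collects P (g1 # e) v"
    using same unfolding same_coll_def by blast
  obtain y where y: "admissible P y" "count_list y g1 = 1" "h y = \<one>\<^bsub>H2 P\<^esub>"
    and steps: "(coll_step P)\<^sup>*\<^sup>* (e @ y) v"
    using collection_power_step[of "replicate (Suc r1) g1" v] u n1 nf_word_count_g1
      h2_part_g1_power_append[of P \<sigma> "Suc r1" "[]"]
    unfolding collects_def by fastforce
  have "h (e @ y) = h (g1 # e)"
    using u w steps y(1,2) n1 r1_pos admissible_e count_g1_words_over[OF e_in_words_over]
    by (intro same_collection_h2_part_eq) (auto simp: collects_def)
  then show ?thesis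
    using y h2_part_e_append h2_part_words_over[OF e_in_words_over]
      hom_in_carrier[OF hom E_in_carrier] by simp
qed

lemma sigma_pow_eq_inner:
  assumes "\<forall>j\<in>{2..pn P}. same_coll P ((j, True) # replicate r1 g1) ((j, True) # e)"
    and "x \<in> carrier (H2 P)"
  shows "(\<sigma> ^^ r1) x = inv\<^bsub>H2 P\<^esub> E \<otimes>\<^bsub>H2 P\<^esub> x \<otimes>\<^bsub>H2 P\<^esub> E"
  using H2_hom_eqI[OF hom_funpow[OF hom] H2.inner_hom[OF E_in_carrier] _ assms(2)]
    sigma_pow_generator assms(1) by blast

lemma sigma_iso:
  assumes "\<forall>j\<in>{2..pn P}. same_coll P ((j, True) # replicate r1 g1) ((j, True) # e)"
  shows "\<sigma> \<in> iso (H2 P) (H2 P)"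
proof (rule isoI[OF hom])
  obtain k where k: "r1 = Suc k" using r1_pos by (cases r1) auto
  have "bij_betw (\<sigma> ^^ r1) (carrier (H2 P)) (carrier (H2 P)) \<longleftrightarrow>
      bij_betw (\<lambda>x. inv\<^bsub>H2 P\<^esub> E \<otimes>\<^bsub>H2 P\<^esub> x \<otimes>\<^bsub>H2 P\<^esub> E) (carrier (H2 P)) (carrier (H2 P))"
    by (rule bij_betw_cong) (rule sigma_pow_eq_inner[OF assms])
  then have "bij_betw (\<sigma> ^^ r1) (carrier (H2 P)) (carrier (H2 P))"
    using H2.inner_bij[OF E_in_carrier] by simp
  then show "bij_betw \<sigma> (carrier (H2 P)) (carrier (H2 P))"
    unfolding k by (rule bij_betw_if_funpow_Suc[OF hom_carrier[OF hom]])
qed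

end

theorem lemma11:
  fixes P :: pcp and r1 :: nat and \<sigma> :: "word set \<Rightarrow> word set"
  assumes n1: "1 \<le> pn P"
    and wf: "pcp_wf P"
    and der: "derived_ok P"
    and r1: "pr P 1 = enat r1"
    and cons: "consistent2 P"
    and hom: "\<sigma> \<in> hom (H2 P) (H2 P)"
    and gens: "\<forall>j\<in>{2..pn P}. \<sigma> (cls P [(j, True)]) = cls P (gvec P 1 (pa P 1 j))"
  shows
    "((\<forall>j\<in>{2..pn P}. same_coll P ((j, True) # replicate r1 (1, True))
                                 ((j, True) # gvec P 1 (pe P 1))) \<longrightarrow>
        (\<forall>x\<in>carrier (H2 P). (\<sigma> ^^ r1) x =
            inv\<^bsub>H2 P\<^esub> (cls P (gvec P 1 (pe P 1))) \<otimes>\<^bsub>H2 P\<^esub> x \<otimes>\<^bsub>H2 P\<^esub> cls P (gvec P 1 (pe P 1)))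
        \<and> \<sigma> \<in> iso (H2 P) (H2 P))
   \<and> ((\<forall>j\<in>{2..pn P}. same_coll P ((j, True) # replicate r1 (1, True))
                                 ((j, True) # gvec P 1 (pe P 1)))
       \<and> same_coll P (replicate (Suc r1) (1, True)) ((1, True) # gvec P 1 (pe P 1)) \<longrightarrow>
        \<sigma> (cls P (gvec P 1 (pe P 1))) = cls P (gvec P 1 (pe P 1)))"
proof -
  interpret pcp_endo P r1 \<sigma>
    by (rule pcp_endo.intro[OF wf_pcp.intro[OF wf der] pcp_endo_axioms.intro[OF n1 r1 hom gens]])
  show ?thesis
    using sigma_pow_eq_inner sigma_iso sigma_fixes_E by (intro conjI impI ballI) simp_all
qed

end
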